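(* There is an algorithm to decide, for a given CFSM protocol $\mathbf P$ with communication graph $(N,E)$ and a given family of recognizable relations $\mathbf R(S)\subseteq\prod_{\xi\in E}M_\xi^*$ indexed by the composite states $S\in\prod_{j\in N}K_j$ (each given effectively, e.g. as a finite union of products of regular languages specified by finite automata), whether the family is consistent with respect to $\mathbf P$.
   Context: A CFSM protocol $\mathbf P$ has a finite directed communication graph $G=(N,E)$ (edge $\xi$ has tail $-\xi$, head $+\xi$), pairwise disjoint finite message sets $M_\xi$, and for each $j\in N$ a finite state machine $F_j=(K_j,\Sigma_j,T_j,h_j)$: finite state set $K_j$, initial state $h_j$, alphabet $\Sigma_j=\{+b: b\in M_\xi,\ j=+\xi\}\cup\{-b: b\in M_\xi,\ j=-\xi\}$, transitions $T_j\subseteq K_j\times\Sigma_j\times K_j$ ($+b$ = receive, $-b$ = send). A composite state is $S=(p_j:j\in N)$; a channel content is $C=(x_\xi:\xi\in E)$, $x_\xi\in M_\xi^*$; global states are pairs $(S,C)$. A step: some machine $F_i$ takes $p_i\xrightarrow{-b}q_i$ with $b\in M_\beta$, $i=-\beta$, appending $b$ to the end of $x_\beta$; or takes $p_i\xrightarrow{+b}q_i$ with $b\in M_\beta$, $i=+\beta$, provided $x_\beta$ begins with $b$, removing it; all else unchanged. $\vdash^*$ means reachability by finitely many steps. A relation $\mathbf R\subseteq\prod_{\xi\in E}M_\xi^*$ is recognizable if it is a finite union of sets $\prod_{\xi\in E}L_\xi$ with each $L_\xi\subseteq M_\xi^*$ regular. A family $\mathbf R(S)$ is consistent (with respect to $\mathbf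 P$) if $(S,C)\vdash^*(S',C')$ and $C\in\mathbf R(S)$ imply $C'\in\mathbf R(S')$. *)

theory Defs
  imports Main "HOL-Library.Nat_Bijection"
begin

datatype recf =
    Zero_f
  | Suc_f
  | Proj nat
  | Comp recf "recf list"
  | PrimRec recf recf
  | Minim recf

inductive eval :: "recf \<Rightarrow> nat list \<Rightarrow> nat \<Rightarrow> bool" where
  eval_zero: "eval Zero_f xs 0"
| eval_suc: "eval Suc_f (x # xs) (Suc x)"
| eval_proj: "i < length xs \<Longrightarrow> eval (Proj i) xs (xs ! i)"
| eval_comp: "list_all2 (\<lambda>g y. eval g xs y) gs ys \<Longrightarrow> eval f ys z \<Longrightarrow> eval (Comp f gs) xs z"
| eval_pr0: "eval f xs y \<Longrightarrow> eval (PrimRec f g) (0 # xs) y"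
| eval_prS: "eval (PrimRec f g) (n # xs) y \<Longrightarrow> eval g (y # n # xs) z
             \<Longrightarrow> eval (PrimRec f g) (Suc n # xs) z"
| eval_min: "eval f (n # xs) 0 \<Longrightarrow> (\<forall>m<n. \<exists>y. eval f (m # xs) (Suc y))
             \<Longrightarrow> eval (Minim f) xs n"

text \<open>Nodes are 0..<n. Edges are indexed 0..<length es; edge e = (tail, head).
  Messages of edge e are the pairs (e,b) with b < ms!e, so the sets M_e are
  automatically pairwise disjoint; in a channel of edge e only the index b is stored.
  An action (s, e, b) is "-b" (send) if s, "+b" (receive) otherwise, b \<in> M_e.
  Machine j: (number of states k, initial state h, transition list of (p, action, q)),
  state set 0..<k.\<close>

type_synonym action = "bool \<times> nat \<times> nat"
type_synonym machine = "nat \<times> nat \<times> (nat \<times> action \<times> nat) list"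
type_synonym protocol = "nat \<times> (nat \<times> nat) list \<times> nat list \<times> machine list"

fun p_nodes :: "protocol \<Rightarrow> nat" where "p_nodes (n, es, ms, F) = n"
fun p_edges :: "protocol \<Rightarrow> (nat \<times> nat) list" where "p_edges (n, es, ms, F) = es"
fun p_msgs :: "protocol \<Rightarrow> nat list" where "p_msgs (n, es, ms, F) = ms"
fun p_machs :: "protocol \<Rightarrow> machine list" where "p_machs (n, es, ms, F) = F"

fun m_states :: "machine \<Rightarrow> nat" where "m_states (k, h, T) = k"
fun m_init :: "machine \<Rightarrow> nat" where "m_init (k, h, T) = h"
fun m_trans :: "machine \<Rightarrow> (nat \<times> action \<times> nat) list" where "m_trans (k, h, T) = T"

definition wf_protocol :: "protocol \<Rightarrow> bool" where
  "wf_protocol P \<longleftrightarrow>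
     length (p_msgs P) = length (p_edges P) \<and>
     length (p_machs P) = p_nodes P \<and>
     (\<forall>(a, b) \<in> set (p_edges P). a < p_nodes P \<and> b < p_nodes P) \<and>
     (\<forall>j < p_nodes P.
        m_init (p_machs P ! j) < m_states (p_machs P ! j) \<and>
        (\<forall>(p, (s, e, b), q) \<in> set (m_trans (p_machs P ! j)).
           p < m_states (p_machs P ! j) \<and> q < m_states (p_machs P ! j) \<and>
           e < length (p_edges P) \<and> b < p_msgs P ! e \<and>
           (if s then fst (p_edges P ! e) = j else snd (p_edges P ! e) = j)))"

text \<open>Global states (S, C): S composite state (list indexed by nodes),
  C channel contents (list of words indexed by edges).\<close>

definition valid_comp :: "protocol \<Rightarrow> nat list \<Rightarrow> bool" where
  "valid_comp P S \<longleftrightarrow> length S = p_nodes P \<and>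
     (\<forall>j < p_nodes P. S ! j < m_states (p_machs P ! j))"

definition valid_chan :: "protocol \<Rightarrow> nat list list \<Rightarrow> bool" where
  "valid_chan P C \<longleftrightarrow> length C = length (p_edges P) \<and>
     (\<forall>e < length (p_edges P). \<forall>b \<in> set (C ! e). b < p_msgs P ! e)"

inductive step :: "protocol \<Rightarrow> nat list \<times> nat list list \<Rightarrow> nat list \<times> nat list list \<Rightarrow> bool"
  for P where
  send: "j < p_nodes P \<Longrightarrow> (p, (True, e, b), q) \<in> set (m_trans (p_machs P ! j)) \<Longrightarrow>
         S ! j = p \<Longrightarrow> step P (S, C) (S[j := q], C[e := C ! e @ [b]])"
| recv: "j < p_nodes P \<Longrightarrow> (p, (False, e, b), q) \<in> set (m_trans (p_machs P ! j)) \<Longrightarrow>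
         S ! j = p \<Longrightarrow> C ! e = b # w \<Longrightarrow> step P (S, C) (S[j := q], C[e := w])"

text \<open>NFA: (number of states, initial states, final states, transitions (p, letter, q)).\<close>
type_synonym nfa = "nat \<times> nat list \<times> nat list \<times> (nat \<times> nat \<times> nat) list"

inductive nfa_run :: "(nat \<times> nat \<times> nat) list \<Rightarrow> nat \<Rightarrow> nat list \<Rightarrow> nat \<Rightarrow> bool" for T where
  run_nil: "nfa_run T p [] p"
| run_cons: "(p, a, r) \<in> set T \<Longrightarrow> nfa_run T r w q \<Longrightarrow> nfa_run T p (a # w) q"

fun nfa_accepts :: "nfa \<Rightarrow> nat list \<Rightarrow> bool" where
  "nfa_accepts (k, I, Fi, T) w \<longleftrightarrow> (\<exists>p \<in> set I. \<exists>q \<in> set Fi. nfa_run T p w q)"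

text \<open>A recognizable relation: finite union (list) of products; a product is a list
  giving for each edge e an NFA for a regular language L_e \<subseteq> M_e^*.\<close>
type_synonym recrel = "nfa list list"

definition rel_mem :: "protocol \<Rightarrow> recrel \<Rightarrow> nat list list \<Rightarrow> bool" where
  "rel_mem P R C \<longleftrightarrow> valid_chan P C \<and>
     (\<exists>pr \<in> set R. length pr = length (p_edges P) \<and>
        (\<forall>e < length (p_edges P). nfa_accepts (pr ! e) (C ! e)))"

text \<open>A family R(S) indexed by composite states: a finite table; states not listed
  get the empty relation (first matching entry counts).\<close>
type_synonym family = "(nat list \<times> recrel) list"

definition fam_rel :: "family \<Rightarrow> nat list \<Rightarrow> recrel" where
  "fam_rel fam S = (case map_of fam S of Some R \<Rightarrow> R | None \<Rightarrow> [])"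

definition consistent :: "protocol \<Rightarrow> family \<Rightarrow> bool" where
  "consistent P fam \<longleftrightarrow>
     (\<forall>S C S' C'. valid_comp P S \<and> rel_mem P (fam_rel fam S) C \<and> (step P)\<^sup>*\<^sup>* (S, C) (S', C')
        \<longrightarrow> rel_mem P (fam_rel fam S') C')"

fun enc_act :: "action \<Rightarrow> nat" where
  "enc_act (s, e, b) = prod_encode (of_bool s, prod_encode (e, b))"
fun enc_trans :: "nat \<times> action \<times> nat \<Rightarrow> nat" where
  "enc_trans (p, a, q) = prod_encode (p, prod_encode (enc_act a, q))"
fun enc_machine :: "machine \<Rightarrow> nat" where
  "enc_machine (k, h, T) = prod_encode (k, prod_encode (h, list_encode (map enc_trans T)))"
fun enc_protocol :: "protocol \<Rightarrow> nat" where
  "enc_protocol (n, es, ms, F) = prod_encode (n, prod_encode (list_encode (map prod_encode es),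
      prod_encode (list_encode ms, list_encode (map enc_machine F))))"
fun enc_ntrans :: "nat \<times> nat \<times> nat \<Rightarrow> nat" where
  "enc_ntrans (p, a, q) = prod_encode (p, prod_encode (a, q))"
fun enc_nfa :: "nfa \<Rightarrow> nat" where
  "enc_nfa (k, I, Fi, T) = prod_encode (k, prod_encode (list_encode I,
      prod_encode (list_encode Fi, list_encode (map enc_ntrans T))))"
definition enc_recrel :: "recrel \<Rightarrow> nat" where
  "enc_recrel R = list_encode (map (\<lambda>pr. list_encode (map enc_nfa pr)) R)"
fun enc_entry :: "nat list \<times> recrel \<Rightarrow> nat" where
  "enc_entry (S, R) = prod_encode (list_encode S, enc_recrel R)"
definition enc_family :: "family \<Rightarrow> nat" where
  "enc_family fam = list_encode (map enc_entry fam)"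
fun enc_input :: "protocol \<times> family \<Rightarrow> nat" where
  "enc_input (P, fam) = prod_encode (enc_protocol P, enc_family fam)"

end

(* Consistency can only fail along a single step: it fails iff some step leads from (S, C) with
   C in R(S) to (S', C') with C' not in R(S').  Whether a channel word lies in a regular language
   of the family depends only on which state pairs of the finitely many automata it connects, so
   by the pigeonhole principle on these profiles of prefixes every word can be shortened to a
   length bounded in terms of the input while keeping all memberships.  Hence a counterexample
   exists iff one exists whose code lies below a bound computable from the code of the input,
   and this bounded search is a primitive recursive expression, which compiles to a recursive
   function. *)

theory Submission
  imports Defs
begin

section \<open>Primitive recursive expressions\<close>

text \<open>Expressions denote total functions on argument lists: a variable outside the list
  evaluates to \<open>0\<close>, so that \<open>recf_of\<close> below needs no well-formedness condition.\<close>

datatype prexp = Var nat | Zero | Succ prexp | App prexp "prexp list" | Rec prexp prexp prexp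

primrec peval :: "prexp \<Rightarrow> nat list \<Rightarrow> nat" where
  "peval (Var i) xs = (if i < length xs then xs ! i else 0)"
| "peval Zero xs = 0"
| "peval (Succ e) xs = Suc (peval e xs)"
| "peval (App g es) xs = peval g (map (\<lambda>e. peval e xs) es)"
| "peval (Rec n e0 e1) xs = rec_nat (peval e0 xs) (\<lambda>i a. peval e1 (a # i # xs)) (peval n xs)"

fun recf_of :: "nat \<Rightarrow> prexp \<Rightarrow> recf" where
  "recf_of k (Var i) = (if i < k then Proj i else Zero_f)"
| "recf_of k Zero = Zero_f"
| "recf_of k (Succ e) = Comp Suc_f [recf_of k e]"
| "recf_of k (App g es) = Comp (recf_of (length es) g) (map (recf_of k) es)"
| "recf_of k (Rec n e0 e1) =
     Comp (PrimRec (recf_of k e0) (recf_of (Suc (Suc k)) e1)) (recf_of k n # map Proj [0..<k])"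

lemma eval_PrimRec:
  assumes "\<And>xs. length xs = k \<Longrightarrow> eval f xs (g xs)"
    and "\<And>ys. length ys = Suc (Suc k) \<Longrightarrow> eval f' ys (h ys)"
    and "length xs = k"
  shows "eval (PrimRec f f') (m # xs) (rec_nat (g xs) (\<lambda>i a. h (a # i # xs)) m)"
  by (induction m) (use assms in \<open>auto intro: eval_pr0 eval_prS\<close>)

lemma eval_recf_of: "length xs = k \<Longrightarrow> eval (recf_of k e) xs (peval e xs)"
proof (induction k e arbitrary: xs rule: recf_of.induct)
  case (1 k i)
  then show ?case by (auto intro: eval_proj eval_zero)
next
  case (2 k)
  then show ?case by (simp add: eval_zero)
next
  case (3 k e)
  then show ?case by (auto intro!: eval_comp[where ys = "[_]"] eval_suc)
next
  case (4 k g es)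
  have "list_all2 (\<lambda>f y. eval f xs y) (map (recf_of k) es) (map (\<lambda>e. peval e xs) es)"
    using 4 by (auto simp: list_all2_conv_all_nth)
  then show ?case using 4 by (auto intro: eval_comp)
next
  case (5 k n e0 e1)
  have "list_all2 (\<lambda>f y. eval f xs y) (map Proj [0..<k]) xs"
    using 5 by (auto simp: list_all2_conv_all_nth intro: eval_proj)
  then have "list_all2 (\<lambda>f y. eval f xs y) (recf_of k n # map Proj [0..<k]) (peval n xs # xs)"
    using 5 by simp
  moreover have "eval (PrimRec (recf_of k e0) (recf_of (Suc (Suc k)) e1)) (peval n xs # xs)
      (peval (Rec n e0 e1) xs)"
    using 5 by (auto intro: eval_PrimRec)
  ultimately show ?case by (auto intro: eval_comp)
qed

definition Add :: "prexp \<Rightarrow> prexp \<Rightarrow> prexp" where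
  "Add a b = App (Rec (Var 1) (Var 0) (Succ (Var 0))) [a, b]"

definition Mul :: "prexp \<Rightarrow> prexp \<Rightarrow> prexp" where
  "Mul a b = App (Rec (Var 1) Zero (Add (Var 0) (Var 2))) [a, b]"

definition Pred :: "prexp \<Rightarrow> prexp" where
  "Pred a = App (Rec (Var 0) Zero (Var 1)) [a]"

definition Monus :: "prexp \<Rightarrow> prexp \<Rightarrow> prexp" where
  "Monus a b = App (Rec (Var 1) (Var 0) (Pred (Var 0))) [a, b]"

definition Neg :: "prexp \<Rightarrow> prexp" where
  "Neg a = App (Rec (Var 0) (Succ Zero) Zero) [a]"

definition Pow2 :: "prexp \<Rightarrow> prexp" where
  "Pow2 a = App (Rec (Var 0) (Succ Zero) (Add (Var 0) (Var 0))) [a]"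

lemma peval_Add [simp]: "peval (Add a b) xs = peval a xs + peval b xs"
proof -
  have "rec_nat m (\<lambda>i r. Suc r) n = m + n" for m n :: nat by (induction n) simp_all
  then show ?thesis by (simp add: Add_def)
qed

lemma peval_Mul [simp]: "peval (Mul a b) xs = peval a xs * peval b xs"
proof -
  have "rec_nat 0 (\<lambda>i r. r + m) n = m * n" for m n :: nat by (induction n) simp_all
  then show ?thesis by (simp add: Mul_def)
qed

lemma peval_Pred [simp]: "peval (Pred a) xs = peval a xs - 1"
proof -
  have "rec_nat 0 (\<lambda>i r. i) n = n - 1" for n :: nat by (induction n) simp_all
  then show ?thesis by (simp add: Pred_def)
qed

lemma peval_Monus [simp]: "peval (Monus a b) xs = peval a xs - peval b xs"
proof -
  have "rec_nat m (\<lambda>i r. r - 1) n = m - n" for m n :: nat by (induction n) simp_all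
  then show ?thesis by (simp add: Monus_def)
qed

lemma peval_Neg [simp]: "peval (Neg a) xs = of_bool (peval a xs = 0)"
proof -
  have "rec_nat (Suc 0) (\<lambda>i r. 0) n = of_bool (n = 0)" for n :: nat by (cases n) simp_all
  then show ?thesis by (simp add: Neg_def)
qed

lemma peval_Pow2 [simp]: "peval (Pow2 a) xs = 2 ^ peval a xs"
proof -
  have "rec_nat (Suc 0) (\<lambda>i r. r + r) n = 2 ^ n" for n :: nat by (induction n) simp_all
  then show ?thesis by (simp add: Pow2_def)
qed

text \<open>Truth values are encoded as \<open>0\<close> (false) and any positive number (true);
  the connectives below return \<open>0\<close> or \<open>1\<close>.\<close>

definition Conj :: "prexp \<Rightarrow> prexp \<Rightarrow> prexp" where
  "Conj a b = Neg (Add (Neg a) (Neg b))"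

definition Eq :: "prexp \<Rightarrow> prexp \<Rightarrow> prexp" where
  "Eq a b = Neg (Add (Monus a b) (Monus b a))"

definition Less :: "prexp \<Rightarrow> prexp \<Rightarrow> prexp" where
  "Less a b = Neg (Neg (Monus b a))"

definition Cond :: "prexp \<Rightarrow> prexp \<Rightarrow> prexp \<Rightarrow> prexp" where
  "Cond c a b = Add (Mul a (Neg (Neg c))) (Mul b (Neg c))"

lemma peval_Conj [simp]: "peval (Conj a b) xs = of_bool (peval a xs \<noteq> 0 \<and> peval b xs \<noteq> 0)"
  by (simp add: Conj_def)

lemma peval_Eq [simp]: "peval (Eq a b) xs = of_bool (peval a xs = peval b xs)"
  by (simp add: Eq_def)

lemma peval_Less [simp]: "peval (Less a b) xs = of_bool (peval a xs < peval b xs)"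
  by (simp add: Less_def)

lemma peval_Cond [simp]: "peval (Cond c a b) xs = (if peval c xs \<noteq> 0 then peval a xs else peval b xs)"
  by (simp add: Cond_def)

text \<open>Bounded sums and quantifiers bind de Bruijn style: the body is evaluated on the current
  argument list of length \<open>k\<close> extended in front by the bound variable.\<close>

definition SumLt :: "nat \<Rightarrow> prexp \<Rightarrow> prexp \<Rightarrow> prexp" where
  "SumLt k n body =
     App (Rec (Var 0) Zero (Add (Var 0) (App body (Var 1 # map Var [3..<k + 3])))) (n # map Var [0..<k])"

definition ExLt :: "nat \<Rightarrow> prexp \<Rightarrow> prexp \<Rightarrow> prexp" where
  "ExLt k n body = Neg (Neg (SumLt k n body))"

definition AllLt :: "nat \<Rightarrow> prexp \<Rightarrow> prexp \<Rightarrow> prexp" where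
  "AllLt k n body = Neg (SumLt k n (Neg body))"

lemma peval_SumLt [simp]:
  assumes "length xs = k"
  shows "peval (SumLt k n body) xs = (\<Sum>i<peval n xs. peval body (i # xs))"
proof -
  have "map (\<lambda>e. peval e xs) (map Var [0..<k]) = xs"
    by (rule nth_equalityI) (simp_all add: assms)
  moreover have "map (\<lambda>e. peval e (r # i # m # xs)) (map Var [3..<k + 3]) = xs" for r i m
    by (rule nth_equalityI) (simp_all add: assms)
  moreover have "rec_nat 0 (\<lambda>i r. r + f i) m = (\<Sum>i<m. f i)" for f :: "nat \<Rightarrow> nat" and m
    by (induction m) simp_all
  ultimately show ?thesis
    by (simp add: SumLt_def del: map_map)
qed

lemma peval_ExLt [simp]:
  "length xs = k \<Longrightarrow> peval (ExLt k n body) xs = of_bool (\<exists>i<peval n xs. peval body (i # xs) \<noteq> 0)"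
  by (simp add: ExLt_def)

lemma peval_AllLt [simp]:
  "length xs = k \<Longrightarrow> peval (AllLt k n body) xs = of_bool (\<forall>i<peval n xs. peval body (i # xs) \<noteq> 0)"
  by (auto simp: AllLt_def disjoint_iff)

definition Pr :: "prexp \<Rightarrow> prexp \<Rightarrow> prexp" where
  "Pr a b = Add (App (Rec (Var 0) Zero (Add (Var 0) (Succ (Var 1)))) [Add a b]) a"

lemma peval_Pr [simp]: "peval (Pr a b) xs = prod_encode (peval a xs, peval b xs)"
proof -
  have "rec_nat 0 (\<lambda>i r. r + Suc i) n = triangle n" for n by (induction n) simp_all
  then show ?thesis by (simp add: Pr_def prod_encode_def)
qed

lemma sum_prod_encode_eq:
  fixes f :: "nat \<Rightarrow> nat \<Rightarrow> nat"
  shows "(\<Sum>a<Suc n. \<Sum>b<Suc n. f a b * of_bool (prod_encode (a, b) = n)) = case_prod f (prod_decode n)"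
proof -
  obtain a0 b0 where n: "prod_decode n = (a0, b0)" by fastforce
  then have "n = prod_encode (a0, b0)" by (metis prod_decode_inverse)
  then have bounds: "a0 < Suc n" "b0 < Suc n"
    and eq: "prod_encode (a, b) = n \<longleftrightarrow> a = a0 \<and> b = b0" for a b
    using le_prod_encode_1 le_prod_encode_2 by (auto simp: less_Suc_eq_le)
  have "f a b * of_bool (prod_encode (a, b) = n) = (if b = b0 then if a = a0 then f a b else 0 else 0)"
    for a b using eq by simp
  then show ?thesis using bounds by (simp add: n sum.delta del: lessThan_Suc)
qed

definition Fst :: "prexp \<Rightarrow> prexp" where
  "Fst a = App (SumLt 1 (Succ (Var 0)) (SumLt 2 (Succ (Var 1)) (Mul (Var 1) (Eq (Pr (Var 1) (Var 0)) (Var 2))))) [a]"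

definition Snd :: "prexp \<Rightarrow> prexp" where
  "Snd a = App (SumLt 1 (Succ (Var 0)) (SumLt 2 (Succ (Var 1)) (Mul (Var 0) (Eq (Pr (Var 1) (Var 0)) (Var 2))))) [a]"

lemma peval_Fst [simp]: "peval (Fst a) xs = fst (prod_decode (peval a xs))"
  using sum_prod_encode_eq[of "\<lambda>a b. a"] by (simp add: Fst_def case_prod_beta)

lemma peval_Snd [simp]: "peval (Snd a) xs = snd (prod_decode (peval a xs))"
  using sum_prod_encode_eq[of "\<lambda>a b. b"] by (simp add: Snd_def case_prod_beta)

lemma prod_decode_0 [simp]: "prod_decode 0 = (0, 0)"
  using prod_encode_inverse[of "(0, 0)"] by (simp add: prod_encode_def)

lemma length_le_list_encode: "length xs \<le> list_encode xs"
  by (induction xs) (auto intro: le_trans[OF _ le_prod_encode_2])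

lemma member_le_list_encode: "x \<in> set xs \<Longrightarrow> x \<le> list_encode xs"
proof (induction xs)
  case (Cons y xs)
  then show ?case
    using le_prod_encode_1[of y "list_encode xs"] le_prod_encode_2[of "list_encode xs" y] by auto
qed simp

lemma member_le_list_encode_map:
  "x \<in> set xs \<Longrightarrow> f x \<le> list_encode (map f xs)"
  by (simp add: member_le_list_encode)

lemma le_prod_encode_1_trans: "n \<le> a \<Longrightarrow> n \<le> prod_encode (a, b)"
  using le_prod_encode_1 order_trans by blast

lemma le_prod_encode_2_trans: "n \<le> b \<Longrightarrow> n \<le> prod_encode (a, b)"
  using le_prod_encode_2 order_trans by blast

lemma prod_encode_mono:
  assumes "a \<le> a'" and "b \<le> b'"
  shows "prod_encode (a, b) \<le> prod_encode (a', b')"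
proof -
  have "triangle m \<le> triangle n" if "m \<le> n" for m n
    using that by (induction n) (auto simp: le_Suc_eq)
  from this[of "a + b" "a' + b'"] show ?thesis
    using assms by (simp add: prod_encode_def)
qed

lemma list_encode_le_replicate:
  "length xs \<le> n \<Longrightarrow> \<forall>x\<in>set xs. x \<le> b \<Longrightarrow> list_encode xs \<le> list_encode (replicate n b)"
proof (induction xs arbitrary: n)
  case (Cons x xs)
  then obtain m where "n = Suc m" by (cases n) auto
  with Cons show ?case by (auto intro: prod_encode_mono)
qed simp

lemma list_encode_eq_Cons_iff:
  "list_encode u = Suc (prod_encode (b, list_encode w)) \<longleftrightarrow> u = b # w"
  by (metis list_encode.simps(2) list_encode_eq)

definition Tl :: "prexp \<Rightarrow> prexp" where
  "Tl c = Snd (Pred c)"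

definition Drop :: "prexp \<Rightarrow> prexp \<Rightarrow> prexp" where
  "Drop i c = App (Rec (Var 0) (Var 1) (Tl (Var 0))) [i, c]"

definition Nth :: "prexp \<Rightarrow> prexp \<Rightarrow> prexp" where
  "Nth c i = Fst (Pred (Drop i c))"

definition Len :: "prexp \<Rightarrow> prexp" where
  "Len c = App (SumLt 1 (Var 0) (Neg (Neg (Drop (Var 0) (Var 1))))) [c]"

definition Replicate :: "prexp \<Rightarrow> prexp \<Rightarrow> prexp" where
  "Replicate n b = App (Rec (Var 0) Zero (Succ (Pr (Var 3) (Var 0)))) [n, b]"

lemma peval_Tl [simp]: "peval (Tl c) xs = list_encode (tl (list_decode (peval c xs)))"
proof -
  have "snd (prod_decode (list_encode ys - 1)) = list_encode (tl ys)" for ys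
    by (cases ys) simp_all
  from this[of "list_decode (peval c xs)"] show ?thesis by (simp add: Tl_def)
qed

lemma peval_Drop [simp]: "peval (Drop i c) xs = list_encode (drop (peval i xs) (list_decode (peval c xs)))"
proof -
  have "rec_nat (list_encode ys) (\<lambda>i r. list_encode (tl (list_decode r))) n = list_encode (drop n ys)"
    for ys n by (induction n) (simp_all add: drop_Suc tl_drop)
  from this[of "list_decode (peval c xs)"] show ?thesis by (simp add: Drop_def)
qed

lemma peval_Nth [simp]:
  "peval (Nth c i) xs =
     (if peval i xs < length (list_decode (peval c xs)) then list_decode (peval c xs) ! peval i xs else 0)"
proof -
  have "fst (prod_decode (list_encode (drop i ys) - 1)) = (if i < length ys then ys ! i else 0)" for ys i
    by (cases "i < length ys") (simp_all add: Cons_nth_drop_Suc[symmetric])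
  then show ?thesis by (simp add: Nth_def)
qed

lemma peval_Len [simp]: "peval (Len c) xs = length (list_decode (peval c xs))"
proof -
  have "(\<Sum>k<list_encode ys. of_bool (drop k ys \<noteq> [])) = length ys" for ys :: "nat list"
  proof -
    have "{..<list_encode ys} \<inter> {k. drop k ys \<noteq> []} = {..<length ys}"
      using length_le_list_encode[of ys] by auto
    then show ?thesis by (simp add: sum_of_bool_eq)
  qed
  from this[of "list_decode (peval c xs)"] show ?thesis
    by (simp add: Len_def list_encode_eq[of _ "[]", simplified])
qed

lemma peval_Replicate [simp]:
  "peval (Replicate n b) xs = list_encode (replicate (peval n xs) (peval b xs))"
proof -
  have "rec_nat 0 (\<lambda>i r. Suc (prod_encode (b, r))) n = list_encode (replicate n b)" for n b
    by (induction n) simp_all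
  then show ?thesis by (simp add: Replicate_def)
qed

lemma ex_code_less_iff:
  assumes "\<And>x. dec (enc x) = x" and "\<And>x. W x \<Longrightarrow> enc x < n"
  shows "(\<exists>c<n. W (dec c)) \<longleftrightarrow> (\<exists>x. W x)"
  using assms by metis

lemma ex_less_list_code: "(\<exists>c<n. \<Phi> c) \<longleftrightarrow> (\<exists>xs. list_encode xs < n \<and> \<Phi> (list_encode xs))"
  by (metis list_decode_inverse)

lemma ex_less_chan_code:
  "(\<exists>c<n. \<Phi> c) \<longleftrightarrow> (\<exists>C. list_encode (map list_encode C) < n \<and> \<Phi> (list_encode (map list_encode C)))"
proof -
  have "list_encode (map list_encode (map list_decode (list_decode c))) = c" for c
    by (simp add: comp_def)
  then show ?thesis by metis
qed

section \<open>Reduction to single steps\<close>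

definition counterexample ::
    "protocol \<Rightarrow> family \<Rightarrow> nat list \<Rightarrow> nat list list \<Rightarrow> nat list \<Rightarrow> nat list list \<Rightarrow> bool" where
  "counterexample P fam S C S' C' \<longleftrightarrow>
     valid_comp P S \<and> rel_mem P (fam_rel fam S) C \<and> step P (S, C) (S', C') \<and>
     \<not> rel_mem P (fam_rel fam S') C'"

lemma valid_comp_step:
  assumes "wf_protocol P" and "step P (S, C) (S', C')" and "valid_comp P S"
  shows "valid_comp P S'"
  using assms(2)
proof cases
  case (send j p e b q)
  then have "q < m_states (p_machs P ! j)" using assms(1) unfolding wf_protocol_def by fastforce
  then show ?thesis using assms(3) send unfolding valid_comp_def by (auto simp: nth_list_update)
next
  case (recv j p e b q w)
  then have "q < m_states (p_machs P ! j)" using assms(1) unfolding wf_protocol_def by fastforce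
  then show ?thesis using assms(3) recv unfolding valid_comp_def by (auto simp: nth_list_update)
qed

lemma valid_chan_step:
  assumes "wf_protocol P" and "step P (S, C) (S', C')" and "valid_chan P C"
  shows "valid_chan P C'"
  using assms(2)
proof cases
  case (send j p e b q)
  then have "e < length (p_edges P)" "b < p_msgs P ! e"
    using assms(1) unfolding wf_protocol_def by fastforce+
  then show ?thesis
    using assms(3) send unfolding valid_chan_def by (auto simp: nth_list_update)
next
  case (recv j p e b q w)
  then show ?thesis
    using assms(3) unfolding valid_chan_def by (cases "e < length C") (auto simp: nth_list_update)
qed

lemma consistent_iff_no_counterexample:
  assumes wf: "wf_protocol P"
  shows "consistent P fam \<longleftrightarrow> (\<nexists>S C S' C'. counterexample P fam S C S' C')"
proof
  assume "consistent P fam"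
  then show "\<nexists>S C S' C'. counterexample P fam S C S' C'"
    unfolding consistent_def counterexample_def by (metis r_into_rtranclp)
next
  assume none: "\<nexists>S C S' C'. counterexample P fam S C S' C'"
  have "valid_comp P (fst g') \<and> rel_mem P (fam_rel fam (fst g')) (snd g')"
    if "(step P)\<^sup>*\<^sup>* g g'" "valid_comp P (fst g)" "rel_mem P (fam_rel fam (fst g)) (snd g)" for g g'
    using that
  proof (induction rule: rtranclp_induct)
    case (step g' g'')
    then have "step P (fst g', snd g') (fst g'', snd g'')" by simp
    with step none show ?case using valid_comp_step[OF wf] unfolding counterexample_def by blast
  qed simp
  then show "consistent P fam" unfolding consistent_def by fastforce
qed

fun fires :: "nat \<Rightarrow> nat \<times> action \<times> nat \<Rightarrow> nat list \<Rightarrow> nat list list \<Rightarrow> nat list \<Rightarrow> nat list list \<Rightarrow> bool" where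
  "fires j (p, (s, e, b), q) S C S' C' \<longleftrightarrow> S ! j = p \<and> S' = S[j := q] \<and>
     (if s then C' = C[e := C ! e @ [b]] else \<exists>w. C ! e = b # w \<and> C' = C[e := w])"

lemma step_iff_fires:
  "step P (S, C) (S', C') \<longleftrightarrow> (\<exists>j<p_nodes P. \<exists>tr\<in>set (m_trans (p_machs P ! j)). fires j tr S C S' C')"
proof
  assume "step P (S, C) (S', C')"
  then show "\<exists>j<p_nodes P. \<exists>tr\<in>set (m_trans (p_machs P ! j)). fires j tr S C S' C'"
    by cases force+
next
  assume "\<exists>j<p_nodes P. \<exists>tr\<in>set (m_trans (p_machs P ! j)). fires j tr S C S' C'"
  then obtain j p s e b q where "j < p_nodes P" "(p, (s, e, b), q) \<in> set (m_trans (p_machs P ! j))"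
    "fires j (p, (s, e, b), q) S C S' C'" by fastforce
  then show "step P (S, C) (S', C')"
    by (cases s) (auto intro: step.send step.recv)
qed

section \<open>Short counterexamples\<close>

lemma nfa_run_Nil_iff [simp]: "nfa_run T p [] q \<longleftrightarrow> p = q"
  by (auto elim: nfa_run.cases intro: nfa_run.intros)

lemma nfa_run_Cons_iff [simp]: "nfa_run T p (a # w) q \<longleftrightarrow> (\<exists>r. (p, a, r) \<in> set T \<and> nfa_run T r w q)"
  by (auto elim: nfa_run.cases intro: nfa_run.intros)

lemma nfa_run_append: "nfa_run T p (u @ v) q \<longleftrightarrow> (\<exists>r. nfa_run T p u r \<and> nfa_run T r v q)"
  by (induction u arbitrary: p) auto

definition word_equiv :: "(nat \<times> nat \<times> nat) list set \<Rightarrow> nat \<Rightarrow> nat list \<Rightarrow> nat list \<Rightarrow> bool" where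
  "word_equiv Ts m u v \<longleftrightarrow>
     (\<forall>T\<in>Ts. \<forall>p q. nfa_run T p u q \<longleftrightarrow> nfa_run T p v q) \<and> ((\<forall>b\<in>set u. b < m) \<longleftrightarrow> (\<forall>b\<in>set v. b < m))"

lemma word_equiv_refl: "word_equiv Ts m w w"
  by (simp add: word_equiv_def)

lemma word_equiv_sym: "word_equiv Ts m u v \<Longrightarrow> word_equiv Ts m v u"
  by (simp add: word_equiv_def)

lemma word_equiv_trans: "word_equiv Ts m u v \<Longrightarrow> word_equiv Ts m v w \<Longrightarrow> word_equiv Ts m u w"
  by (simp add: word_equiv_def)

lemma word_equiv_append: "word_equiv Ts m u v \<Longrightarrow> word_equiv Ts m (u @ w) (v @ w)"
  by (auto simp: word_equiv_def nfa_run_append)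

lemma word_equiv_Cons: "word_equiv Ts m u v \<Longrightarrow> word_equiv Ts m (a # u) (a # v)"
  by (auto simp: word_equiv_def)

definition states_le :: "(nat \<times> nat \<times> nat) list set \<Rightarrow> nat \<Rightarrow> bool" where
  "states_le Ts M \<longleftrightarrow> (\<forall>T\<in>Ts. \<forall>(p, a, q)\<in>set T. p \<le> M \<and> q \<le> M)"

lemma nfa_run_states_le:
  assumes "states_le Ts M" "T \<in> Ts" "nfa_run T p w q" "w \<noteq> []"
  shows "p \<le> M \<and> q \<le> M"
  using assms(3,4)
proof (induction w arbitrary: p)
  case (Cons a w)
  then obtain r where r: "(p, a, r) \<in> set T" "nfa_run T r w q" by auto
  then have "p \<le> M \<and> r \<le> M" using assms(1,2) unfolding states_le_def by fastforce
  then show ?case using Cons.IH r by (cases w) auto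
qed simp

text \<open>For nonempty words only states up to \<open>M\<close> matter, so the profile below is a finite
  invariant that determines a word up to \<^const>\<open>word_equiv\<close>.\<close>

definition run_profile ::
    "(nat \<times> nat \<times> nat) list set \<Rightarrow> nat \<Rightarrow> nat \<Rightarrow> nat list
       \<Rightarrow> ((nat \<times> nat \<times> nat) list \<times> nat \<times> nat) set \<times> bool \<times> bool" where
  "run_profile Ts M m w =
     ({(T, p, q). T \<in> Ts \<and> p \<le> M \<and> q \<le> M \<and> nfa_run T p w q}, w = [], \<forall>b\<in>set w. b < m)"

lemma word_equiv_if_run_profile_eq:
  assumes M: "states_le Ts M" and eq: "run_profile Ts M m u = run_profile Ts M m v"
  shows "word_equiv Ts m u v"
proof -
  have Nil: "u = [] \<longleftrightarrow> v = []" and alph: "(\<forall>b\<in>set u. b < m) \<longleftrightarrow> (\<forall>b\<in>set v. b < m)"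
    and runs: "\<And>T p q. T \<in> Ts \<Longrightarrow> p \<le> M \<Longrightarrow> q \<le> M \<Longrightarrow> nfa_run T p u q \<longleftrightarrow> nfa_run T p v q"
    using eq unfolding run_profile_def by (auto simp: set_eq_iff)
  have "nfa_run T p u q \<longleftrightarrow> nfa_run T p v q" if "T \<in> Ts" for T p q
  proof (cases "u = []")
    case False
    then show ?thesis
      using Nil runs[OF that] nfa_run_states_le[OF M that] by metis
  qed (use Nil in simp)
  then show ?thesis using alph unfolding word_equiv_def by blast
qed

lemma exists_short_word_equiv:
  assumes fin: "finite Ts" and K: "card Ts \<le> K" and M: "states_le Ts M"
  shows "\<exists>w'. word_equiv Ts m w w' \<and> length w' \<le> 4 * 2 ^ (K * (Suc M * Suc M))"
proof (induction "length w" arbitrary: w rule: less_induct)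
  case less
  let ?N = "4 * 2 ^ (K * (Suc M * Suc M)) :: nat"
  show ?case
  proof (cases "length w \<le> ?N")
    case False
    let ?B = "Pow (Ts \<times> {..M} \<times> {..M}) \<times> (UNIV :: bool set) \<times> (UNIV :: bool set)"
    let ?f = "\<lambda>i. run_profile Ts M m (take i w)"
    have "card ?B = 2 ^ (card Ts * (Suc M * Suc M)) * 4"
      using fin by (simp add: card_cartesian_product card_Pow UNIV_Times_UNIV[symmetric]
          del: UNIV_Times_UNIV)
    also have "\<dots> \<le> ?N"
      using K by (simp add: power_increasing mult_le_mono1 del: mult_Suc mult_Suc_right)
    finally have "card ?B < card {..length w}"
      using False by simp
    moreover have "card (?f ` {..length w}) \<le> card ?B"
      using fin by (intro card_mono) (auto simp: run_profile_def)
    ultimately have "card (?f ` {..length w}) < card {..length w}"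
      by linarith
    then obtain i0 j0 where ij0: "i0 \<le> length w" "j0 \<le> length w" "i0 \<noteq> j0" "?f i0 = ?f j0"
      using pigeonhole unfolding inj_on_def by blast
    obtain i j where ij: "i < j" "j \<le> length w" "?f i = ?f j"
      using ij0 by (metis nat_neq_iff)
    have "word_equiv Ts m (take j w @ drop j w) (take i w @ drop j w)"
      using word_equiv_if_run_profile_eq[OF M ij(3)] by (rule word_equiv_append[OF word_equiv_sym])
    then have cut: "word_equiv Ts m w (take i w @ drop j w)"
      by simp
    have "length (take i w @ drop j w) < length w"
      using ij by simp
    then obtain w' where "word_equiv Ts m (take i w @ drop j w) w'" "length w' \<le> ?N"
      using less by blast
    then show ?thesis
      using word_equiv_trans[OF cut] by blast
  qed (use word_equiv_refl in blast)
qed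

definition chan_equiv :: "protocol \<Rightarrow> (nat \<times> nat \<times> nat) list set \<Rightarrow> nat list list \<Rightarrow> nat list list \<Rightarrow> bool" where
  "chan_equiv P Ts C D \<longleftrightarrow>
     length C = length D \<and> (\<forall>e<length C. word_equiv Ts (p_msgs P ! e) (C ! e) (D ! e))"

lemma chan_equiv_update:
  "chan_equiv P Ts C D \<Longrightarrow> word_equiv Ts (p_msgs P ! e) u v \<Longrightarrow> chan_equiv P Ts (C[e := u]) (D[e := v])"
  unfolding chan_equiv_def by (metis length_list_update nth_list_update_eq nth_list_update_neq)

definition nfas_within :: "(nat \<times> nat \<times> nat) list set \<Rightarrow> recrel \<Rightarrow> bool" where
  "nfas_within Ts R \<longleftrightarrow> (\<forall>pr\<in>set R. \<forall>(k, I, Fi, T)\<in>set pr. T \<in> Ts)"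

lemma nfas_within_fam_rel:
  assumes "\<forall>(S, R)\<in>set fam. nfas_within Ts R"
  shows "nfas_within Ts (fam_rel fam S)"
proof (cases "map_of fam S")
  case (Some R)
  then have "(S, R) \<in> set fam" by (rule map_of_SomeD)
  with assms show ?thesis by (auto simp: fam_rel_def Some)
qed (simp add: fam_rel_def nfas_within_def)

lemma rel_mem_chan_equiv:
  assumes "chan_equiv P Ts C D" and "nfas_within Ts R"
  shows "rel_mem P R C \<longleftrightarrow> rel_mem P R D"
proof -
  have len: "length C = length D"
    using assms(1) unfolding chan_equiv_def by blast
  have "nfa_accepts a (C ! e) \<longleftrightarrow> nfa_accepts a (D ! e)"
    if "pr \<in> set R" "a \<in> set pr" "e < length C" for pr a e
    using assms that unfolding chan_equiv_def nfas_within_def word_equiv_def by (cases a) fastforce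
  then have "(\<forall>e<length C. nfa_accepts (pr ! e) (C ! e)) \<longleftrightarrow> (\<forall>e<length C. nfa_accepts (pr ! e) (D ! e))"
    if "pr \<in> set R" "length pr = length C" for pr
    using that by auto
  moreover have "valid_chan P C \<longleftrightarrow> valid_chan P D"
    using assms(1) unfolding chan_equiv_def valid_chan_def word_equiv_def by auto
  ultimately show ?thesis
    unfolding rel_mem_def by (intro conj_cong bex_cong refl) (auto simp: valid_chan_def)
qed

lemma counterexample_chan_equiv:
  assumes "counterexample P fam S C S' C'" and "\<forall>(S, R)\<in>set fam. nfas_within Ts R"
    and "chan_equiv P Ts C D" and "chan_equiv P Ts C' D'" and "step P (S, D) (S', D')"
  shows "counterexample P fam S D S' D'"
  using assms rel_mem_chan_equiv[OF _ nfas_within_fam_rel] unfolding counterexample_def by blast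

lemma short_counterexample:
  fixes K M N :: nat
  defines "N \<equiv> 4 * 2 ^ (K * (Suc M * Suc M))"
  assumes wf: "wf_protocol P" and ce: "counterexample P fam S C S' C'"
    and fam: "\<forall>(S, R)\<in>set fam. nfas_within Ts R"
    and Ts: "finite Ts" "card Ts \<le> K" "states_le Ts M"
  shows "\<exists>D D'. counterexample P fam S D S' D' \<and>
           (\<forall>w\<in>set D. length w \<le> Suc N) \<and> (\<forall>w\<in>set D'. length w \<le> Suc N)"
proof -
  obtain sh where sh: "\<And>m w. word_equiv Ts m w (sh m w) \<and> length (sh m w) \<le> N"
    using exists_short_word_equiv[OF Ts] unfolding N_def by metis
  define D0 where "D0 = map (\<lambda>e. sh (p_msgs P ! e) (C ! e)) [0..<length C]"
  have D0: "chan_equiv P Ts C D0" "\<forall>w\<in>set D0. length w \<le> N"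
    using sh by (auto simp: D0_def chan_equiv_def)
  have short_update: "\<forall>w\<in>set (D0[e := u]). length w \<le> Suc N" if "length u \<le> Suc N" for e u
    using D0(2) that set_update_subset_insert[of D0 e u] by fastforce
  have "length C = length (p_edges P)"
    using ce unfolding counterexample_def rel_mem_def valid_chan_def by blast
  from ce have "step P (S, C) (S', C')" unfolding counterexample_def by blast
  then show ?thesis
  proof cases
    case (send j p e b q)
    define D' where "D' = D0[e := D0 ! e @ [b]]"
    have "e < length C"
      using wf send \<open>length C = _\<close> unfolding wf_protocol_def by fastforce
    then have "chan_equiv P Ts C' D'"
      using D0(1) unfolding send D'_def chan_equiv_def by (auto simp: nth_list_update word_equiv_append)
    moreover have "step P (S, D0) (S', D')"
      unfolding D'_def send using send by (auto intro: step.send)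
    moreover have "\<forall>w\<in>set D'. length w \<le> Suc N"
      using D0(2) \<open>e < length C\<close> unfolding D'_def by (intro short_update) (simp add: D0_def)
    ultimately show ?thesis
      using counterexample_chan_equiv[OF ce fam D0(1)] D0(2) le_SucI by blast
  next
    case (recv j p e b q w)
    define D where "D = D0[e := b # sh (p_msgs P ! e) w]"
    define D' where "D' = D0[e := sh (p_msgs P ! e) w]"
    have "chan_equiv P Ts C D"
      using chan_equiv_update[OF D0(1) word_equiv_Cons[OF sh[THEN conjunct1]]] recv
      unfolding D_def by (metis list_update_id)
    moreover have "chan_equiv P Ts C' D'"
      using chan_equiv_update[OF D0(1) sh[THEN conjunct1]] recv unfolding D'_def by simp
    moreover have "e < length C"
      using wf recv \<open>length C = _\<close> unfolding wf_protocol_def by fastforce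
    then have "D ! e = b # sh (p_msgs P ! e) w"
      by (simp add: D_def D0_def)
    then have "step P (S, D) (S[j := q], D[e := sh (p_msgs P ! e) w])"
      using recv by (auto intro: step.recv)
    then have "step P (S, D) (S', D')"
      by (simp add: D_def D'_def recv)
    moreover have "\<forall>w\<in>set D. length w \<le> Suc N" "\<forall>w\<in>set D'. length w \<le> Suc N"
      using sh[of "p_msgs P ! e" w] unfolding D_def D'_def by (auto intro!: short_update)
    ultimately show ?thesis
      using counterexample_chan_equiv[OF ce fam] by blast
  qed
qed

text \<open>The input code is kept folded, so that it can occur literally among the arguments of the
  expressions below; it is decoded with \<open>prod_decode_enc_input\<close>.\<close>

declare enc_input.simps [simp del]

lemma prod_decode_enc_input [simp]: "prod_decode (enc_input (P, fam)) = (enc_protocol P, enc_family fam)"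
  by (simp add: enc_input.simps del: enc_protocol.simps)

lemma list_decode_enc_family [simp]: "list_decode (enc_family fam) = map enc_entry fam"
  by (simp add: enc_family_def)

lemma enc_protocol_eq:
  "enc_protocol P = prod_encode (p_nodes P, prod_encode (list_encode (map prod_encode (p_edges P)),
     prod_encode (list_encode (p_msgs P), list_encode (map enc_machine (p_machs P)))))"
  by (cases P) simp

lemma enc_machine_eq:
  "enc_machine M = prod_encode (m_states M, prod_encode (m_init M, list_encode (map enc_trans (m_trans M))))"
  by (cases M) simp

lemma enc_entry_eq: "enc_entry entry = prod_encode (list_encode (fst entry), enc_recrel (snd entry))"
  by (cases entry) simp

lemma enc_ntrans_eq_iff [simp]:
  "enc_ntrans tr = prod_encode (p, prod_encode (a, q)) \<longleftrightarrow> tr = (p, a, q)"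
  by (cases tr) auto

lemma enc_input_bounds:
  fixes P :: protocol and fam :: family and x :: nat
  defines "x \<equiv> enc_input (P, fam)"
  shows "p_nodes P \<le> x" and "length (p_edges P) \<le> x"
    and "e < length (p_msgs P) \<Longrightarrow> p_msgs P ! e \<le> x"
    and "j < length (p_machs P) \<Longrightarrow> m_states (p_machs P ! j) \<le> x"
proof -
  note le_pe = le_prod_encode_1_trans le_prod_encode_2_trans
  have P: "enc_protocol P \<le> x"
    unfolding x_def enc_input.simps by (rule le_prod_encode_1)
  have "p_nodes P \<le> enc_protocol P"
    unfolding enc_protocol_eq by (simp add: le_pe)
  with P show "p_nodes P \<le> x" by linarith
  have "length (p_edges P) \<le> list_encode (map prod_encode (p_edges P))"
    using length_le_list_encode[of "map prod_encode (p_edges P)"] by simp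
  also have "\<dots> \<le> enc_protocol P"
    unfolding enc_protocol_eq by (simp add: le_pe)
  finally show "length (p_edges P) \<le> x" using P by linarith
  show "p_msgs P ! e \<le> x" if "e < length (p_msgs P)"
  proof -
    have "p_msgs P ! e \<le> list_encode (p_msgs P)"
      using that by (simp add: member_le_list_encode)
    also have "\<dots> \<le> enc_protocol P"
      unfolding enc_protocol_eq by (simp add: le_pe)
    finally show ?thesis using P by linarith
  qed
  show "m_states (p_machs P ! j) \<le> x" if "j < length (p_machs P)"
  proof -
    have "m_states (p_machs P ! j) \<le> enc_machine (p_machs P ! j)"
      unfolding enc_machine_eq by (rule le_prod_encode_1)
    also have "\<dots> \<le> list_encode (map enc_machine (p_machs P))"
      using that by (simp add: member_le_list_encode_map)
    also have "\<dots> \<le> enc_protocol P"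
      unfolding enc_protocol_eq by (simp add: le_pe)
    finally show ?thesis using P by linarith
  qed
qed

lemma nfas_within_enc_input:
  "\<forall>(S, R)\<in>set fam. nfas_within {T. list_encode (map enc_ntrans T) \<le> enc_input (P, fam)} R"
proof -
  have "list_encode (map enc_ntrans T) \<le> enc_input (P, fam)"
    if "(S, R) \<in> set fam" "pr \<in> set R" "(k, I, Fi, T) \<in> set pr" for S R pr k I Fi T
  proof -
    have "list_encode (map enc_ntrans T) \<le> enc_nfa (k, I, Fi, T)"
      by (simp add: le_prod_encode_2_trans)
    also have "\<dots> \<le> list_encode (map enc_nfa pr)"
      using that(3) by (rule member_le_list_encode_map)
    also have "\<dots> \<le> enc_recrel R"
      using that(2) unfolding enc_recrel_def by (rule member_le_list_encode_map)
    also have "\<dots> \<le> enc_entry (S, R)"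
      by (simp add: le_prod_encode_2)
    also have "\<dots> \<le> enc_family fam"
      using that(1) unfolding enc_family_def by (rule member_le_list_encode_map)
    also have "\<dots> \<le> enc_input (P, fam)"
      unfolding enc_input.simps by (rule le_prod_encode_2)
    finally show ?thesis .
  qed
  then show ?thesis
    unfolding nfas_within_def by fastforce
qed

lemma nfa_trans_codes_below:
  "finite {T. list_encode (map enc_ntrans T) \<le> x}"
  "card {T. list_encode (map enc_ntrans T) \<le> x} \<le> Suc x"
  "states_le {T. list_encode (map enc_ntrans T) \<le> x} x"
proof -
  let ?c = "\<lambda>T. list_encode (map enc_ntrans T)"
  have "inj ?c"
    by (rule injI) (simp add: list_encode_eq inj_map_eq_map inj_def)
  then have inj: "inj_on ?c {T. ?c T \<le> x}"
    by (rule inj_on_subset) simp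
  have sub: "?c ` {T. ?c T \<le> x} \<subseteq> {..x}"
    by auto
  show "finite {T. ?c T \<le> x}"
    using finite_imageD[OF finite_subset[OF sub] inj] by simp
  show "card {T. ?c T \<le> x} \<le> Suc x"
    using card_inj_on_le[OF inj sub] by simp
  have "p \<le> x \<and> q \<le> x" if "?c T \<le> x" "(p, a, q) \<in> set T" for T p a q
  proof -
    have "enc_ntrans (p, a, q) \<le> ?c T"
      using that(2) by (rule member_le_list_encode_map)
    moreover have "p \<le> enc_ntrans (p, a, q)" "q \<le> enc_ntrans (p, a, q)"
      by (simp_all add: le_prod_encode_1 le_prod_encode_2_trans le_prod_encode_2)
    ultimately show ?thesis using that(1) by linarith
  qed
  then show "states_le {T. ?c T \<le> x} x"
    unfolding states_le_def by blast
qed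

text \<open>The bound of \<open>exists_short_word_equiv\<close> for the at most \<open>Suc x\<close> automata with states up to
  \<open>x\<close> given by \<open>nfa_trans_codes_below\<close>, plus one for the message a step appends.\<close>

definition short_word_bound :: "nat \<Rightarrow> nat" where
  "short_word_bound x = Suc (4 * 2 ^ (Suc x * (Suc x * Suc x)))"

definition comp_code_bound :: "nat \<Rightarrow> nat" where
  "comp_code_bound x = Suc (list_encode (replicate x x))"

definition chan_code_bound :: "nat \<Rightarrow> nat" where
  "chan_code_bound x = Suc (list_encode (replicate x (list_encode (replicate (short_word_bound x) x))))"

lemma valid_comp_code_less:
  assumes "wf_protocol P" and "valid_comp P S"
  shows "list_encode S < comp_code_bound (enc_input (P, fam))"
proof -
  have "length S \<le> enc_input (P, fam)"
    using assms enc_input_bounds(1)[of P fam] by (simp add: valid_comp_def)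
  moreover have "y \<le> enc_input (P, fam)" if "y \<in> set S" for y
  proof -
    from that obtain i where "i < length S" "y = S ! i"
      by (auto simp: in_set_conv_nth)
    then show ?thesis
      using assms enc_input_bounds(4)[of i P fam] by (auto simp: valid_comp_def wf_protocol_def)
  qed
  ultimately show ?thesis
    by (simp add: comp_code_bound_def less_Suc_eq_le list_encode_le_replicate del: replicate.simps)
qed

lemma valid_chan_code_less:
  assumes "wf_protocol P" and "valid_chan P C" and "\<forall>w\<in>set C. length w \<le> short_word_bound x"
    and x: "x = enc_input (P, fam)"
  shows "list_encode (map list_encode C) < chan_code_bound x"
proof -
  have "length C \<le> x"
    using assms enc_input_bounds(2)[of P fam] by (simp add: valid_chan_def)
  moreover have "list_encode w \<le> list_encode (replicate (short_word_bound x) x)" if "w \<in> set C" for w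
  proof (rule list_encode_le_replicate)
    from that obtain e where "e < length C" "w = C ! e"
      by (auto simp: in_set_conv_nth)
    then have e: "e < length (p_edges P)" "w = C ! e"
      using assms(2) by (simp_all add: valid_chan_def)
    then have "p_msgs P ! e \<le> x"
      using assms(1) enc_input_bounds(3)[of e P fam] x by (simp add: wf_protocol_def)
    then show "\<forall>b\<in>set w. b \<le> x"
      using assms(2) e by (fastforce simp: valid_chan_def)
  qed (use assms(3) that in blast)
  ultimately show ?thesis
    by (simp add: chan_code_bound_def less_Suc_eq_le list_encode_le_replicate del: replicate.simps)
qed

lemma ex_counterexample_iff_bounded:
  assumes wf: "wf_protocol P"
  shows "(\<exists>S C S' C'. counterexample P fam S C S' C') \<longleftrightarrow>
    (\<exists>S C S' C'. counterexample P fam S C S' C' \<and>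
      list_encode S < comp_code_bound (enc_input (P, fam)) \<and>
      list_encode S' < comp_code_bound (enc_input (P, fam)) \<and>
      list_encode (map list_encode C) < chan_code_bound (enc_input (P, fam)) \<and>
      list_encode (map list_encode C') < chan_code_bound (enc_input (P, fam)))"
    (is "?ce \<longleftrightarrow> ?bounded")
proof
  assume ?ce
  then obtain S C S' C' where ce: "counterexample P fam S C S' C'" by blast
  obtain D D' where D: "counterexample P fam S D S' D'"
    and short: "\<forall>w\<in>set D. length w \<le> short_word_bound (enc_input (P, fam))"
      "\<forall>w\<in>set D'. length w \<le> short_word_bound (enc_input (P, fam))"
    using short_counterexample[OF wf ce nfas_within_enc_input nfa_trans_codes_below]
    unfolding short_word_bound_def by blast
  have "valid_comp P S" "valid_chan P D" "step P (S, D) (S', D')"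
    using D by (auto simp: counterexample_def rel_mem_def)
  then have "valid_comp P S'" "valid_chan P D'"
    using valid_comp_step[OF wf] valid_chan_step[OF wf] by blast+
  then show ?bounded
    using D short wf \<open>valid_comp P S\<close> \<open>valid_chan P D\<close>
    by (blast intro: valid_comp_code_less valid_chan_code_less)
qed blast

section \<open>Searching for counterexamples primitive recursively\<close>

lemma nfa_run_iff_state_seq:
  "nfa_run T p w q \<longleftrightarrow> (\<exists>sq. length sq = Suc (length w) \<and> sq ! 0 = p \<and> sq ! length w = q \<and>
      (\<forall>k<length w. (sq ! k, w ! k, sq ! Suc k) \<in> set T))"
proof (induction w arbitrary: p)
  case Nil
  show ?case by (auto intro!: exI[of _ "[p]"])
next
  case (Cons a w)
  have "nfa_run T p (a # w) q \<longleftrightarrow> (\<exists>r sq. (p, a, r) \<in> set T \<and> length sq = Suc (length w) \<and>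
      sq ! 0 = r \<and> sq ! length w = q \<and> (\<forall>k<length w. (sq ! k, w ! k, sq ! Suc k) \<in> set T))"
    using Cons.IH by auto
  also have "\<dots> \<longleftrightarrow> (\<exists>sq. length sq = Suc (length (a # w)) \<and> sq ! 0 = p \<and> sq ! length (a # w) = q \<and>
      (\<forall>k<length (a # w). (sq ! k, (a # w) ! k, sq ! Suc k) \<in> set T))"
  proof
    assume "\<exists>r sq. (p, a, r) \<in> set T \<and> length sq = Suc (length w) \<and> sq ! 0 = r \<and> sq ! length w = q \<and>
      (\<forall>k<length w. (sq ! k, w ! k, sq ! Suc k) \<in> set T)"
    then obtain sq where "(p, a, sq ! 0) \<in> set T" "length sq = Suc (length w)" "sq ! length w = q"
      "\<forall>k<length w. (sq ! k, w ! k, sq ! Suc k) \<in> set T" by blast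
    then show "\<exists>sq. length sq = Suc (length (a # w)) \<and> sq ! 0 = p \<and> sq ! length (a # w) = q \<and>
      (\<forall>k<length (a # w). (sq ! k, (a # w) ! k, sq ! Suc k) \<in> set T)"
      by (intro exI[of _ "p # sq"]) (auto simp: less_Suc_eq_0_disj)
  next
    assume "\<exists>sq. length sq = Suc (length (a # w)) \<and> sq ! 0 = p \<and> sq ! length (a # w) = q \<and>
      (\<forall>k<length (a # w). (sq ! k, (a # w) ! k, sq ! Suc k) \<in> set T)"
    then obtain sq where sq: "length sq = Suc (Suc (length w))" "sq ! 0 = p" "sq ! Suc (length w) = q"
      "\<forall>k<Suc (length w). (sq ! k, (a # w) ! k, sq ! Suc k) \<in> set T" by auto
    then show "\<exists>r sq. (p, a, r) \<in> set T \<and> length sq = Suc (length w) \<and> sq ! 0 = r \<and> sq ! length w = q \<and>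
      (\<forall>k<length w. (sq ! k, w ! k, sq ! Suc k) \<in> set T)"
      by (intro exI[of _ "sq ! 1"] exI[of _ "tl sq"]) (auto simp: nth_tl)
  qed
  finally show ?case .
qed

text \<open>All states of a run of \<open>T\<close> from \<open>p\<close> are bounded by \<open>p\<close> plus the code of \<open>T\<close>,
  which bounds the search for the sequence of states.\<close>

definition nfa_run_prexp :: prexp where
  "nfa_run_prexp =
     ExLt 4 (Succ (Replicate (Succ (Len (Var 3))) (Add (Var 1) (Var 0))))
       (Conj (Eq (Len (Var 0)) (Succ (Len (Var 4))))
       (Conj (Eq (Nth (Var 0) Zero) (Var 2))
       (Conj (Eq (Nth (Var 0) (Len (Var 4))) (Var 3))
         (AllLt 5 (Len (Var 4))
           (ExLt 6 (Len (Var 2))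
             (Eq (Nth (Var 3) (Var 0))
                 (Pr (Nth (Var 2) (Var 1)) (Pr (Nth (Var 6) (Var 1)) (Nth (Var 2) (Succ (Var 1)))))))))))"

lemma peval_nfa_run_prexp [simp]:
  "peval nfa_run_prexp [list_encode (map enc_ntrans T), p, q, list_encode w] = of_bool (nfa_run T p w q)"
proof -
  let ?Tc = "list_encode (map enc_ntrans T)"
  let ?W = "\<lambda>sq. length sq = Suc (length w) \<and> sq ! 0 = p \<and> sq ! length w = q \<and>
      (\<forall>k<length w. (sq ! k, w ! k, sq ! Suc k) \<in> set T)"
  have "peval nfa_run_prexp [?Tc, p, q, list_encode w] =
      of_bool (\<exists>c<Suc (list_encode (replicate (Suc (length w)) (p + ?Tc))). ?W (list_decode c))"
    by (simp add: nfa_run_prexp_def in_set_conv_nth cong: conj_cong del: replicate.simps)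
  also have "\<dots> = of_bool (\<exists>sq. ?W sq)"
  proof (intro arg_cong[where f = of_bool] ex_code_less_iff)
    fix sq assume W: "?W sq"
    have "x \<le> p + ?Tc" if "x \<in> set sq" for x
    proof -
      from that obtain k where k: "k < length sq" "x = sq ! k"
        by (auto simp: in_set_conv_nth)
      show ?thesis
      proof (cases k)
        case (Suc k')
        then have "(sq ! k', w ! k', x) \<in> set T" using W k by auto
        then have "enc_ntrans (sq ! k', w ! k', x) \<le> ?Tc" by (rule member_le_list_encode_map)
        then show ?thesis
          using le_prod_encode_2[of x "w ! k'"] le_prod_encode_2[of "prod_encode (w ! k', x)" "sq ! k'"]
          by simp
      qed (use W k in simp)
    qed
    then show "list_encode sq < Suc (list_encode (replicate (Suc (length w)) (p + ?Tc)))"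
      using W by (simp add: less_Suc_eq_le list_encode_le_replicate del: replicate.simps)
  qed simp
  also have "\<dots> = of_bool (nfa_run T p w q)"
    by (simp add: nfa_run_iff_state_seq)
  finally show ?thesis .
qed

definition nfa_accepts_prexp :: prexp where
  "nfa_accepts_prexp =
     ExLt 2 (Len (Fst (Snd (Var 0))))
       (ExLt 3 (Len (Fst (Snd (Snd (Var 1)))))
         (App nfa_run_prexp [Snd (Snd (Snd (Var 2))), Nth (Fst (Snd (Var 2))) (Var 1),
                         Nth (Fst (Snd (Snd (Var 2)))) (Var 0), Var 3]))"

lemma peval_nfa_accepts_prexp [simp]:
  "peval nfa_accepts_prexp [enc_nfa a, list_encode w] = of_bool (nfa_accepts a w)"
proof (cases a)
  case (fields k I Fi T)
  then show ?thesis
    by (simp add: nfa_accepts_prexp_def in_set_conv_nth all_set_conv_all_nth cong: conj_cong)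
qed

abbreviation Nodes :: "prexp \<Rightarrow> prexp" where "Nodes x \<equiv> Fst (Fst x)"

abbreviation NumEdges :: "prexp \<Rightarrow> prexp" where "NumEdges x \<equiv> Len (Fst (Snd (Fst x)))"

abbreviation Msgs :: "prexp \<Rightarrow> prexp" where "Msgs x \<equiv> Fst (Snd (Snd (Fst x)))"

abbreviation Machines :: "prexp \<Rightarrow> prexp" where "Machines x \<equiv> Snd (Snd (Snd (Fst x)))"

abbreviation Family :: "prexp \<Rightarrow> prexp" where "Family x \<equiv> Snd x"

definition rel_mem_prexp :: prexp where
  "rel_mem_prexp =
     Conj (Eq (Len (Var 1)) (NumEdges (Var 2)))
     (Conj (AllLt 3 (NumEdges (Var 2))
              (AllLt 4 (Len (Nth (Var 2) (Var 0)))
                 (Less (Nth (Nth (Var 3) (Var 1)) (Var 0)) (Nth (Msgs (Var 4)) (Var 1)))))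
       (ExLt 3 (Len (Var 0))
          (Conj (Eq (Len (Nth (Var 1) (Var 0))) (NumEdges (Var 3)))
                (AllLt 4 (NumEdges (Var 3))
                   (App nfa_accepts_prexp [Nth (Nth (Var 2) (Var 1)) (Var 0), Nth (Var 3) (Var 0)])))))"

lemma peval_rel_mem_prexp [simp]:
  assumes "wf_protocol P"
  shows "peval rel_mem_prexp [enc_recrel R, list_encode (map list_encode C), enc_input (P, fam)] =
    of_bool (rel_mem P R C)"
proof -
  have "length (p_msgs P) = length (p_edges P)"
    using assms by (simp add: wf_protocol_def)
  then show ?thesis
    by (simp add: rel_mem_prexp_def rel_mem_def valid_chan_def enc_protocol_eq enc_recrel_def
        in_set_conv_nth all_set_conv_all_nth cong: conj_cong) blast
qed

lemma fam_rel_Cons: "fam_rel ((S', R) # fam) S = (if S' = S then R else fam_rel fam S)"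
  by (simp add: fam_rel_def)

lemma fam_rel_first_match:
  assumes "\<not> Q []"
  shows "Q (fam_rel fam S) \<longleftrightarrow>
    (\<exists>i<length fam. fst (fam ! i) = S \<and> (\<forall>i'<i. fst (fam ! i') \<noteq> S) \<and> Q (snd (fam ! i)))"
proof (induction fam)
  case Nil
  then show ?case using assms by (simp add: fam_rel_def)
next
  case (Cons entry fam)
  then show ?case
    by (cases entry) (auto simp: fam_rel_Cons Ex_less_Suc2 All_less_Suc2)
qed

definition fam_rel_mem_prexp :: prexp where
  "fam_rel_mem_prexp =
     ExLt 3 (Len (Family (Var 2)))
       (Conj (Eq (Fst (Nth (Family (Var 3)) (Var 0))) (Var 1))
       (Conj (AllLt 4 (Var 0) (Neg (Eq (Fst (Nth (Family (Var 4)) (Var 0))) (Var 2))))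
             (App rel_mem_prexp [Snd (Nth (Family (Var 3)) (Var 0)), Var 2, Var 3])))"

lemma peval_fam_rel_mem_prexp [simp]:
  assumes "wf_protocol P"
  shows "peval fam_rel_mem_prexp [list_encode S, list_encode (map list_encode C), enc_input (P, fam)] =
    of_bool (rel_mem P (fam_rel fam S) C)"
proof -
  have "\<not> rel_mem P [] C" by (simp add: rel_mem_def)
  then show ?thesis
    using assms fam_rel_first_match[of "\<lambda>R. rel_mem P R C"]
    by (simp add: fam_rel_mem_prexp_def enc_entry_eq list_encode_eq cong: conj_cong)
qed

definition valid_comp_prexp :: prexp where
  "valid_comp_prexp =
     Conj (Eq (Len (Var 0)) (Nodes (Var 1)))
          (AllLt 2 (Nodes (Var 1)) (Less (Nth (Var 1) (Var 0)) (Fst (Nth (Machines (Var 2)) (Var 0)))))"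

lemma peval_valid_comp_prexp [simp]:
  assumes "wf_protocol P"
  shows "peval valid_comp_prexp [list_encode S, enc_input (P, fam)] = of_bool (valid_comp P S)"
proof -
  have "length (p_machs P) = p_nodes P"
    using assms by (simp add: wf_protocol_def)
  then show ?thesis
    by (simp add: valid_comp_prexp_def valid_comp_def enc_protocol_eq enc_machine_eq cong: conj_cong)
qed

lemma eq_list_update_iff:
  "ys = xs[j := v] \<longleftrightarrow> length ys = length xs \<and> (\<forall>i<length xs. ys ! i = (if i = j then v else xs ! i))"
proof
  assume "length ys = length xs \<and> (\<forall>i<length xs. ys ! i = (if i = j then v else xs ! i))"
  then show "ys = xs[j := v]" by (intro nth_equalityI) (auto simp: nth_list_update)
qed (simp add: nth_list_update)

definition update_prexp :: prexp where
  "update_prexp =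
     Conj (Eq (Len (Var 0)) (Len (Var 1)))
          (AllLt 4 (Len (Var 1)) (Eq (Nth (Var 1) (Var 0)) (Cond (Eq (Var 0) (Var 3)) (Var 4) (Nth (Var 2) (Var 0)))))"

lemma peval_update_prexp [simp]:
  "peval update_prexp [list_encode ys, list_encode xs, j, v] = of_bool (ys = xs[j := v])"
  by (simp add: update_prexp_def eq_list_update_iff cong: conj_cong)

definition snoc_prexp :: prexp where
  "snoc_prexp =
     Conj (Eq (Len (Var 0)) (Succ (Len (Var 1))))
     (Conj (AllLt 3 (Len (Var 1)) (Eq (Nth (Var 1) (Var 0)) (Nth (Var 2) (Var 0))))
           (Eq (Nth (Var 0) (Len (Var 1))) (Var 2)))"

lemma peval_snoc_prexp [simp]:
  "peval snoc_prexp [list_encode u', list_encode u, b] = of_bool (u' = u @ [b])"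
  by (auto simp: snoc_prexp_def list_eq_iff_nth_eq nth_append less_Suc_eq cong: conj_cong)

definition send_prexp :: prexp where
  "send_prexp =
     Conj (Eq (Len (Var 0)) (Len (Var 1)))
          (AllLt 4 (Len (Var 1))
             (Cond (Eq (Var 0) (Var 3))
                (App snoc_prexp [Nth (Var 1) (Var 0), Nth (Var 2) (Var 0), Var 4])
                (Eq (Nth (Var 1) (Var 0)) (Nth (Var 2) (Var 0)))))"

lemma peval_send_prexp [simp]:
  "peval send_prexp [list_encode (map list_encode C'), list_encode (map list_encode C), e, b] =
     of_bool (C' = C[e := C ! e @ [b]])"
  by (simp add: send_prexp_def eq_list_update_iff list_encode_eq cong: conj_cong)

definition recv_prexp :: prexp where
  "recv_prexp =
     Conj (Eq (Len (Var 0)) (Len (Var 1)))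
          (AllLt 4 (Len (Var 1))
             (Cond (Eq (Var 0) (Var 3))
                (Eq (Nth (Var 2) (Var 0)) (Succ (Pr (Var 4) (Nth (Var 1) (Var 0)))))
                (Eq (Nth (Var 1) (Var 0)) (Nth (Var 2) (Var 0)))))"

lemma peval_recv_prexp [simp]:
  assumes "e < length C"
  shows "peval recv_prexp [list_encode (map list_encode C'), list_encode (map list_encode C), e, b] =
     of_bool (\<exists>w. C ! e = b # w \<and> C' = C[e := w])"
proof -
  have "(\<exists>w. C ! e = b # w \<and> C' = C[e := w]) \<longleftrightarrow>
      length C' = length C \<and> (\<forall>i<length C. if i = e then C ! i = b # C' ! i else C' ! i = C ! i)"
    using assms by (auto simp: eq_list_update_iff)
  then show ?thesis
    by (simp add: recv_prexp_def list_encode_eq list_encode_eq_Cons_iff cong: conj_cong)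
qed

abbreviation Transition :: "prexp \<Rightarrow> prexp \<Rightarrow> prexp \<Rightarrow> prexp" where
  "Transition x j t \<equiv> Nth (Snd (Snd (Nth (Machines x) j))) t"

definition counterexample_at_prexp :: prexp where
  "counterexample_at_prexp =
     (let tr = Transition (Var 6) (Var 1) (Var 0);
          e = Fst (Snd (Fst (Snd tr)));
          b = Snd (Snd (Fst (Snd tr)))
      in Conj (App valid_comp_prexp [Var 5, Var 6])
         (Conj (App fam_rel_mem_prexp [Var 5, Var 3, Var 6])
         (Conj (Eq (Nth (Var 5) (Var 1)) (Fst tr))
         (Conj (App update_prexp [Var 4, Var 5, Var 1, Snd (Snd tr)])
         (Conj (Cond (Fst (Fst (Snd tr)))
                 (App send_prexp [Var 2, Var 3, e, b]) (App recv_prexp [Var 2, Var 3, e, b]))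
               (Neg (App fam_rel_mem_prexp [Var 4, Var 2, Var 6])))))))"

lemma peval_counterexample_at_prexp:
  assumes wf: "wf_protocol P" and j: "j < p_nodes P" and t: "t < length (m_trans (p_machs P ! j))"
  shows "peval counterexample_at_prexp [t, j, list_encode (map list_encode C'), list_encode (map list_encode C),
      list_encode S', list_encode S, enc_input (P, fam)] =
    of_bool (valid_comp P S \<and> rel_mem P (fam_rel fam S) C \<and>
      fires j (m_trans (p_machs P ! j) ! t) S C S' C' \<and> \<not> rel_mem P (fam_rel fam S') C')"
proof -
  obtain p s e b q where tr: "m_trans (p_machs P ! j) ! t = (p, (s, e, b), q)"
    by (metis prod.exhaust)
  have "(p, (s, e, b), q) \<in> set (m_trans (p_machs P ! j))"
    using t tr by (metis nth_mem)
  then have e: "e < length (p_edges P)"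
    using wf j unfolding wf_protocol_def by fastforce
  have lenF: "length (p_machs P) = p_nodes P"
    using wf by (simp add: wf_protocol_def)
  show ?thesis
  proof (cases "valid_comp P S \<and> rel_mem P (fam_rel fam S) C")
    case True
    then have "e < length C" "j < length S"
      using e j by (simp_all add: rel_mem_def valid_chan_def valid_comp_def)
    then show ?thesis
      using wf j t tr lenF True
      by (simp add: counterexample_at_prexp_def enc_protocol_eq enc_machine_eq Let_def cong: conj_cong)
  next
    case False
    then show ?thesis
      using wf by (simp add: counterexample_at_prexp_def Let_def cong: conj_cong
          del: peval_send_prexp peval_recv_prexp peval_update_prexp peval_Nth peval_Cond)
  qed
qed

definition decide_prexp :: prexp where
  "decide_prexp =
     (let comp_bound = \<lambda>x. Succ (Replicate x x);
          word_bound = \<lambda>x. Succ (Mul (Succ (Succ (Succ (Succ Zero))))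
                                     (Pow2 (Mul (Succ x) (Mul (Succ x) (Succ x)))));
          chan_bound = \<lambda>x. Succ (Replicate x (Replicate (word_bound x) x))
      in Neg (ExLt 1 (comp_bound (Var 0))
             (ExLt 2 (comp_bound (Var 1))
             (ExLt 3 (chan_bound (Var 2))
             (ExLt 4 (chan_bound (Var 3))
             (ExLt 5 (Nodes (Var 4))
             (ExLt 6 (Len (Snd (Snd (Nth (Machines (Var 5)) (Var 0)))))
                counterexample_at_prexp)))))))"

lemma ex_counterexample_at_prexp_iff:
  assumes wf: "wf_protocol P"
  shows "(\<exists>j<p_nodes P. \<exists>t<length (m_trans (p_machs P ! j)).
      peval counterexample_at_prexp [t, j, list_encode (map list_encode C'), list_encode (map list_encode C),
        list_encode S', list_encode S, enc_input (P, fam)] \<noteq> 0) \<longleftrightarrow>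
    counterexample P fam S C S' C'"
proof -
  have "(\<exists>j<p_nodes P. \<exists>t<length (m_trans (p_machs P ! j)).
      peval counterexample_at_prexp [t, j, list_encode (map list_encode C'), list_encode (map list_encode C),
        list_encode S', list_encode S, enc_input (P, fam)] \<noteq> 0) \<longleftrightarrow>
    (\<exists>j<p_nodes P. \<exists>t<length (m_trans (p_machs P ! j)). valid_comp P S \<and>
      rel_mem P (fam_rel fam S) C \<and> fires j (m_trans (p_machs P ! j) ! t) S C S' C' \<and>
      \<not> rel_mem P (fam_rel fam S') C')"
    using peval_counterexample_at_prexp[OF wf] by (simp cong: conj_cong) blast
  also have "\<dots> \<longleftrightarrow> counterexample P fam S C S' C'"
    unfolding counterexample_def step_iff_fires by (metis in_set_conv_nth)
  finally show ?thesis .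
qed

lemma peval_decide_prexp:
  assumes wf: "wf_protocol P"
  shows "peval decide_prexp [enc_input (P, fam)] = of_bool (consistent P fam)"
proof -
  let ?x = "enc_input (P, fam)"
  let ?BS = "comp_code_bound ?x" and ?BC = "chan_code_bound ?x"
  have "length (p_machs P) = p_nodes P"
    using wf by (simp add: wf_protocol_def)
  then have "peval decide_prexp [?x] = of_bool (\<not> (\<exists>sc<?BS. \<exists>sc'<?BS. \<exists>cc<?BC. \<exists>cc'<?BC.
      \<exists>j<p_nodes P. \<exists>t<length (m_trans (p_machs P ! j)).
        peval counterexample_at_prexp [t, j, cc', cc, sc', sc, ?x] \<noteq> 0))"
    by (simp add: decide_prexp_def comp_code_bound_def chan_code_bound_def short_word_bound_def
        enc_protocol_eq enc_machine_eq cong: conj_cong del: replicate.simps)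
  also have "\<dots> = of_bool (\<nexists>S S' C C'. list_encode S < ?BS \<and> list_encode S' < ?BS \<and>
      list_encode (map list_encode C) < ?BC \<and> list_encode (map list_encode C') < ?BC \<and>
      counterexample P fam S C S' C')"
    unfolding ex_less_list_code[of ?BS] ex_less_chan_code[of ?BC] ex_counterexample_at_prexp_iff[OF wf]
    by (intro arg_cong[where f = of_bool]) blast
  also have "\<dots> = of_bool (consistent P fam)"
    unfolding consistent_iff_no_counterexample[OF wf] ex_counterexample_iff_bounded[OF wf]
    by (intro arg_cong[where f = of_bool]) blast
  finally show ?thesis .
qed

theorem theorem9p4:
  shows "\<exists>f :: recf. \<forall>P fam. wf_protocol P \<longrightarrow>
           eval f [enc_input (P, fam)] (if consistent P fam then 1 else 0)"
proof (intro exI allI impI)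
  fix P fam
  assume "wf_protocol P"
  then show "eval (recf_of 1 decide_prexp) [enc_input (P, fam)] (if consistent P fam then 1 else 0)"
    using eval_recf_of[of "[enc_input (P, fam)]" 1 decide_prexp]
    by (cases "consistent P fam") (simp_all add: peval_decide_prexp)
qed

end
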